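(* Let $\varphi\colon[\mathbb{F}_2,\mathbb{F}_2]\to\mathbb{Z}$ be the homomorphism defined below. Then $\varphi(g)=\varphi(hgh^{-1})$ for all $g\in[\mathbb{F}_2,\mathbb{F}_2]$ and all $h\in\mathbb{F}_2$.
   Context: $\mathbb{F}_2$ is the free group on $x,y$. Let $\tilde K$ be the graph with vertex set $\mathbb{Z}^2$ and oriented edges $x^iy^jX$ from $(i,j)$ to $(i+1,j)$ and $x^iy^jY$ from $(i,j)$ to $(i,j+1)$ (the universal abelian cover of the wedge of two circles). A $1$-chain is written $\alpha=P_\alpha(x,y)X+Q_\alpha(x,y)Y$ with $P_\alpha,Q_\alpha$ integer Laurent polynomials (the coefficient of $x^iy^j$ in $P_\alpha$ is the coefficient of the edge $x^iy^jX$, similarly for $Q_\alpha$). For $g\in[\mathbb{F}_2,\mathbb{F}_2]$ written as a word in $x^{\pm1},y^{\pm1}$, the associated cycle $\alpha_g$ is the $1$-cycle traced by the lattice path starting at $(0,0)$ in which a letter $x$ (resp. $x^{-1}$, $y$, $y^{-1}$) moves by $(1,0)$ (resp. $(-1,0)$, $(0,1)$, $(0,-1)$) along the corresponding edge, each edge counted with sign $+1$ if traversed in its orientation and $-1$ otherwise; this is a closed path since $g$ has zero exponent sums, and its homology class depends only on $g$. Let $f_\alpha(y)=P_\alpha(1,y)$. Define $\varphi(g)=f_{\alpha_g}'(1)$; this is a homomorphism $[\mathbb{F}_2,\mathbb{F}_2]\to\mathbb{Z}$ (e.g. $\alpha_{[x,y]}=(1-y)X+(x-1)Y$ and $\varphi([x,y])=-1$,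 where $[g,h]=ghg^{-1}h^{-1}$). *)

theory Defs
  imports "HOL-Analysis.Analysis"
begin

text \<open>Generators of the free group F_2 on x, y; a letter is a generator with a sign
  (True = positive power, False = inverse). Elements of F_2 are represented by words.\<close>

datatype gen = GX | GY

type_synonym letter = "gen \<times> bool"
type_synonym word = "letter list"

definition inv_letter :: "letter \<Rightarrow> letter" where
  "inv_letter l = (fst l, \<not> snd l)"

definition inv_word :: "word \<Rightarrow> word" where
  "inv_word w = rev (map inv_letter w)"

text \<open>Words representing elements of the commutator subgroup [F_2,F_2]:
  the closure of products of commutators [a,b] = a b a^-1 b^-1 under free
  (in)equivalence, i.e. insertion/deletion of cancelling pairs.\<close>

inductive_set comm_words :: "word set" where
  cw_nil: "[] \<in> comm_words"
| cw_comm: "a @ b @ inv_word a @ inv_word b \<in> comm_words"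
| cw_app: "u \<in> comm_words \<Longrightarrow> v \<in> comm_words \<Longrightarrow> u @ v \<in> comm_words"
| cw_ins: "u @ v \<in> comm_words \<Longrightarrow> u @ [l, inv_letter l] @ v \<in> comm_words"
| cw_del: "u @ [l, inv_letter l] @ v \<in> comm_words \<Longrightarrow> u @ v \<in> comm_words"

text \<open>1-chains on the lattice graph: coefficient of the edge x^i y^j X (resp. Y)
  is \<open>\<alpha> (i,j) GX\<close> (resp. \<open>\<alpha> (i,j) GY\<close>).\<close>

type_synonym chain = "int \<times> int \<Rightarrow> gen \<Rightarrow> int"

definition edge :: "int \<times> int \<Rightarrow> gen \<Rightarrow> int \<Rightarrow> chain" where
  "edge p e c = (\<lambda>q e'. if q = p \<and> e' = e then c else 0)"

fun path_chain :: "int \<times> int \<Rightarrow> word \<Rightarrow> chain" where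
  "path_chain p [] = (\<lambda>_ _. 0)"
| "path_chain (i,j) ((GX,True) # w) =
     (\<lambda>q e. edge (i,j) GX 1 q e + path_chain (i+1,j) w q e)"
| "path_chain (i,j) ((GX,False) # w) =
     (\<lambda>q e. edge (i-1,j) GX (-1) q e + path_chain (i-1,j) w q e)"
| "path_chain (i,j) ((GY,True) # w) =
     (\<lambda>q e. edge (i,j) GY 1 q e + path_chain (i,j+1) w q e)"
| "path_chain (i,j) ((GY,False) # w) =
     (\<lambda>q e. edge (i,j-1) GY (-1) q e + path_chain (i,j-1) w q e)"

definition alpha :: "word \<Rightarrow> chain" where
  "alpha w = path_chain (0,0) w"

text \<open>f_\<alpha>(y) = P_\<alpha>(1,y) = \<Sum> over X-edges x^i y^j X of coefficient times y^j.\<close>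
definition f_chain :: "chain \<Rightarrow> real \<Rightarrow> real" where
  "f_chain \<alpha> y = (\<Sum>q\<in>{q. \<alpha> q GX \<noteq> 0}. of_int (\<alpha> q GX) * y powi snd q)"

definition phi :: "word \<Rightarrow> real" where
  "phi w = deriv (f_chain (alpha w)) 1"

end

theory Submission
  imports Defs
begin

text \<open>Differentiating \<open>f_\<alpha>(y) = \<Sum> c\<^sub>i\<^sub>j y\<^sup>j\<close> at \<open>y = 1\<close> gives \<open>\<Sum> j c\<^sub>i\<^sub>j\<close>: every X-edge of the
  path is weighted by its height. Hence \<open>\<phi>(g)\<close> is the discrete line integral \<open>\<integral> y dx\<close> along the
  lattice path of \<open>g\<close>. This integral is additive under concatenation, provided the second path
  is started at the height where the first one ends; starting a path \<open>k\<close> units higher adds \<open>k\<close> times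
  its x-exponent sum, and the reversed path \<open>h\<^sup>-\<^sup>1\<close> contributes the negative of \<open>h\<close>. For \<open>hgh\<^sup>-\<^sup>1\<close>
  the contributions of \<open>h\<close> and \<open>h\<^sup>-\<^sup>1\<close> cancel, and \<open>g\<close> is traversed at the height of the endpoint
  of \<open>h\<close>, which changes nothing because \<open>g\<close> has x-exponent sum zero.\<close>

definition x_support :: "chain \<Rightarrow> (int \<times> int) set" where
  "x_support a = {q. a q GX \<noteq> 0}"

definition y_moment :: "chain \<Rightarrow> int" where
  "y_moment a = (\<Sum>q\<in>x_support a. a q GX * snd q)"

lemma x_support_add: "x_support (\<lambda>q e. a q e + b q e) \<subseteq> x_support a \<union> x_support b"
  unfolding x_support_def by auto

lemma x_support_edge: "x_support (edge p e c) \<subseteq> {p}"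
  unfolding x_support_def edge_def by auto

lemma finite_x_support_path_chain: "finite (x_support (path_chain p w))"
proof (induction p w rule: path_chain.induct)
  case 1
  then show ?case by (simp add: x_support_def)
qed (auto intro: finite_subset[OF x_support_add] finite_subset[OF x_support_edge])

lemma y_moment_superset:
  assumes "finite S" "x_support a \<subseteq> S"
  shows "y_moment a = (\<Sum>q\<in>S. a q GX * snd q)"
  unfolding y_moment_def using assms
  by (intro sum.mono_neutral_left) (auto simp: x_support_def)

lemma y_moment_add:
  assumes "finite (x_support a)" "finite (x_support b)"
  shows "y_moment (\<lambda>q e. a q e + b q e) = y_moment a + y_moment b"
proof -
  let ?S = "x_support a \<union> x_support b"
  have "y_moment (\<lambda>q e. a q e + b q e) = (\<Sum>q\<in>?S. (a q GX + b q GX) * snd q)"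
    using assms x_support_add by (intro y_moment_superset) auto
  also have "\<dots> = (\<Sum>q\<in>?S. a q GX * snd q) + (\<Sum>q\<in>?S. b q GX * snd q)"
    by (simp add: sum.distrib distrib_right)
  also have "\<dots> = y_moment a + y_moment b"
    using assms y_moment_superset[of ?S a] y_moment_superset[of ?S b] by simp
  finally show ?thesis .
qed

lemma y_moment_edge: "y_moment (edge p e c) = (if e = GX then c * snd p else 0)"
  using y_moment_superset[of "{p}" "edge p e c"] x_support_edge by (simp add: edge_def)

lemma has_real_derivative_f_chain: "(f_chain a has_real_derivative of_int (y_moment a)) (at 1)"
proof -
  have "((\<lambda>y. of_int (a q GX) * y powi snd q) has_real_derivative of_int (a q GX * snd q)) (at 1)"
    for q
    by (auto intro!: derivative_eq_intros)
  then have "((\<lambda>y. \<Sum>q\<in>x_support a. of_int (a q GX) * y powi snd q) has_real_derivative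
      (\<Sum>q\<in>x_support a. of_int (a q GX * snd q))) (at 1)"
    by (rule DERIV_sum)
  then show ?thesis
    unfolding f_chain_def[abs_def] y_moment_def x_support_def by simp
qed

fun integral_y_dx :: "int \<Rightarrow> word \<Rightarrow> int" where
  "integral_y_dx j [] = 0"
| "integral_y_dx j ((GX,True) # w) = j + integral_y_dx j w"
| "integral_y_dx j ((GX,False) # w) = - j + integral_y_dx j w"
| "integral_y_dx j ((GY,True) # w) = integral_y_dx (j+1) w"
| "integral_y_dx j ((GY,False) # w) = integral_y_dx (j-1) w"

lemma y_moment_path_chain: "y_moment (path_chain (i,j) w) = integral_y_dx j w"
proof (induction "(i,j)" w arbitrary: i j rule: path_chain.induct)
  case 1
  then show ?case by (simp add: y_moment_def x_support_def)
qed (simp_all add: y_moment_add finite_x_support_path_chain y_moment_edge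
    finite_subset[OF x_support_edge])

lemma phi_eq_integral_y_dx: "phi w = of_int (integral_y_dx 0 w)"
  unfolding phi_def alpha_def
  using has_real_derivative_f_chain DERIV_imp_deriv y_moment_path_chain by metis

fun exponent_sum :: "gen \<Rightarrow> word \<Rightarrow> int" where
  "exponent_sum e [] = 0"
| "exponent_sum e (l # w) = (if fst l = e then (if snd l then 1 else -1) else 0) + exponent_sum e w"

lemma exponent_sum_append: "exponent_sum e (u @ v) = exponent_sum e u + exponent_sum e v"
  by (induction u) auto

lemma exponent_sum_inv_word: "exponent_sum e (inv_word w) = - exponent_sum e w"
  by (induction w) (auto simp: inv_word_def inv_letter_def exponent_sum_append)

lemma exponent_sum_comm_words: "g \<in> comm_words \<Longrightarrow> exponent_sum e g = 0"
  by (induction rule: comm_words.induct)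
    (auto simp: exponent_sum_append exponent_sum_inv_word inv_letter_def split: if_splits)

lemma integral_y_dx_append:
  "integral_y_dx j (u @ v) = integral_y_dx j u + integral_y_dx (j + exponent_sum GY u) v"
  by (induction j u rule: integral_y_dx.induct) (auto simp: algebra_simps)

lemma integral_y_dx_shift:
  "integral_y_dx (j + k) w = integral_y_dx j w + k * exponent_sum GX w"
  by (induction j w rule: integral_y_dx.induct) (auto simp: algebra_simps)

lemma integral_y_dx_inv_word:
  "integral_y_dx j (inv_word w) = - integral_y_dx (j - exponent_sum GY w) w"
proof (induction w arbitrary: j)
  case Nil
  then show ?case by (simp add: inv_word_def)
next
  case (Cons l w)
  have "inv_word (l # w) = inv_word w @ [inv_letter l]"
    by (simp add: inv_word_def)
  then have "integral_y_dx j (inv_word (l # w)) =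
      - integral_y_dx (j - exponent_sum GY w) w + integral_y_dx (j - exponent_sum GY w) [inv_letter l]"
    by (simp add: integral_y_dx_append exponent_sum_inv_word Cons)
  moreover obtain e s where "l = (e, s)"
    by fastforce
  ultimately show ?case
    by (cases e; cases s) (simp_all add: inv_letter_def algebra_simps)
qed

theorem lemma2p2:
  fixes g h :: word
  assumes "g \<in> comm_words"
  shows "phi (h @ g @ inv_word h) = phi g"
proof -
  have "exponent_sum GX g = 0" "exponent_sum GY g = 0"
    using exponent_sum_comm_words[OF assms] by auto
  then have "integral_y_dx 0 (h @ g @ inv_word h) = integral_y_dx 0 g"
    using integral_y_dx_shift[of 0 "exponent_sum GY h" g]
    by (simp add: integral_y_dx_append integral_y_dx_inv_word exponent_sum_append)
  then show ?thesis
    by (simp add: phi_eq_integral_y_dx)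
qed

end
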